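(* Assume the standing hypotheses (P) described in the context and let $\epsilon>0$. For every $\eta\in(0,\frac\beta2)$ there exists $\zeta>0$, depending only on $\epsilon$, $\beta$ and $\tilde H(\epsilon)$ (and independent of $n$), such that for every $\phi\in\mathcal H^{pot}(\epsilon)$ that is not $(\frac\beta2-\eta)$-strongly convex it holds that $P^{(\beta/2)}(\phi)\ge\zeta$.
   Context: Let $d\in\mathbb N$; $\lambda$ is the restriction of Lebesgue measure to $[0,1]^d$, $G_{\#}\lambda$ the pushforward. $\mu^*$ is a probability measure on $[0,1]^d$ with Lebesgue density $p^*$, $p^*>0$ on $[0,1]^d$, $p^*=0$ outside. Neural networks with architecture $(l_0,\dots,l_L)$ and activation $\sigma$ realize $x_0\mapsto W_Lx_{L-1}+B_L$, $x_k=\sigma(W_kx_{k-1}+B_k)$; ReCU: $\sigma(x)=\max\{x,0\}^3$. $C^{k,\alpha}$ are Hölder spaces on $[0,1]^d$ with norms $\|\cdot\|_{C^{k,\alpha}}$; $A\ge B$ means $A-B$ positive semidefinite; $d_{JS}$ is the Jensen–Shannon divergence. Hypotheses (P): $p^*\in C^{1,\alpha}([0,1]^d,\mathbb R)$ for some $\alpha\in(0,1)$; $\phi^*\in C^{3,\alpha}([0,1]^d,\mathbb R)$ is the Brenier potential with $\mu^*=(\nabla\phi^* )_{\#}\lambda$; $M\in(1,\infty)$ with $\frac1M\operatorname{Id}\le\operatorname{Hess}\phi^*\le M\operatorname{Id}$ on $[0,1]^d$, and $\beta:=1/M$. For each $\epsilon>0$, $\phi_\epsilon$ is a ReCU network $[0,1]^d\to\mathbb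 R$ with $\frac1{2M}\operatorname{Id}\le\operatorname{Hess}\phi_\epsilon\le2M\operatorname{Id}$ on $[0,1]^d$ and $d_{JS}(\mu^*,(\nabla\phi_\epsilon)_{\#}\lambda)\le\epsilon$, $\mathcal A^\phi(\epsilon)$ is its architecture, $H(\epsilon)=\|\phi_\epsilon\|_{C^{2,1}}$, $\tilde H(\epsilon)\ge H(\epsilon)$ is fixed, and $\mathcal H^{pot}(\epsilon)$ is the set of all ReCU networks $\phi\colon[0,1]^d\to\mathbb R$ with architecture $\mathcal A^\phi(\epsilon)$ and $\|\phi\|_{C^{2,1}([0,1]^d)}\le\tilde H(\epsilon)$. A function $\phi$ on $[0,1]^d$ is $\kappa$-strongly convex if $\phi(\frac{u+u'}2)\le\frac{\phi(u)+\phi(u')}2-\frac\kappa8\|u-u'\|^2$ for all $u,u'\in[0,1]^d$ (equivalently $\phi+\frac\kappa2\|\cdot\|^2$ is convex). For $\kappa>0$ and $\phi\colon[0,1]^d\to\mathbb R$, $P^{(\kappa)}(\phi)=\int_{([0,1]^d)^2}\mathrm{ReLU}\big(\phi(\frac{u+u'}2)-\frac{\phi(u)+\phi(u')}2+\frac\kappa8\|u-u'\|^2\big)\,du\,du'$, where $\mathrm{ReLU}(x)=\max\{x,0\}$. *)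

theory Defs
  imports "HOL-Analysis.Analysis"
begin

definition unit_cube :: "(real^'d) set" where
  "unit_cube = cbox 0 One"

definition recu :: "real \<Rightarrow> real" where
  "recu x = (max x 0) ^ 3"

definition affine_layer :: "nat \<Rightarrow> (nat \<Rightarrow> nat \<Rightarrow> real) \<Rightarrow> (nat \<Rightarrow> real) \<Rightarrow> (nat \<Rightarrow> real) \<Rightarrow> (nat \<Rightarrow> real)" where
  "affine_layer n W B x = (\<lambda>i. (\<Sum>j<n. W i j * x j) + B i)"

text \<open>Evaluation from hidden layer k on: the architecture argument is the remaining list
  [l_k, l_(k+1), ..., l_L], the input is x_k (already activated), and the parameter list
  contains (W_(k+1),B_(k+1)), ..., (W_L,B_L).\<close>
fun hidden_eval :: "(real \<Rightarrow> real) \<Rightarrow> nat list \<Rightarrow> ((nat \<Rightarrow> nat \<Rightarrow> real) \<times> (nat \<Rightarrow> real)) list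
    \<Rightarrow> (nat \<Rightarrow> real) \<Rightarrow> (nat \<Rightarrow> real)" where
  "hidden_eval \<sigma> (n # m # ns) ((W, B) # ps) x =
     (if ns = [] then affine_layer n W B x
      else hidden_eval \<sigma> (m # ns) ps (\<lambda>i. \<sigma> (affine_layer n W B x i)))"
| "hidden_eval \<sigma> _ _ x = x"

text \<open>Realization of a network with architecture [l_0,...,l_L] (l_0 = d, l_L = 1),
  first layer (W1 rows as vectors in R^d, B1), remaining layers ps.\<close>
definition net_realization :: "(real \<Rightarrow> real) \<Rightarrow> nat list \<Rightarrow> (nat \<Rightarrow> real^'d) \<Rightarrow> (nat \<Rightarrow> real)
    \<Rightarrow> ((nat \<Rightarrow> nat \<Rightarrow> real) \<times> (nat \<Rightarrow> real)) list \<Rightarrow> real^'d \<Rightarrow> real" where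
  "net_realization \<sigma> arch W1 B1 ps x =
     (let z = (\<lambda>i. W1 i \<bullet> x + B1 i) in
      if length arch = 2 then z 0 else hidden_eval \<sigma> (tl arch) ps (\<lambda>i. \<sigma> (z i)) 0)"

definition is_recu_net :: "nat list \<Rightarrow> (real^'d \<Rightarrow> real) \<Rightarrow> bool" where
  "is_recu_net arch \<phi> \<longleftrightarrow>
     length arch \<ge> 2 \<and> hd arch = CARD('d) \<and> last arch = 1 \<and>
     (\<exists>W1 B1 ps. length ps = length arch - 2 \<and>
        (\<forall>x. \<phi> x = net_realization recu arch W1 B1 ps x))"

definition pd :: "'d::finite \<Rightarrow> (real^'d \<Rightarrow> real) \<Rightarrow> real^'d \<Rightarrow> real" where
  "pd i f x = deriv (\<lambda>t. f (x + t *\<^sub>R axis i 1)) 0"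

definition c21_norm :: "(real^'d \<Rightarrow> real) \<Rightarrow> real" where
  "c21_norm f = Sup (
      {\<bar>f x\<bar> | x. x \<in> unit_cube}
    \<union> {\<bar>pd i f x\<bar> | i x. x \<in> unit_cube}
    \<union> {\<bar>pd i (pd j f) x\<bar> | i j x. x \<in> unit_cube}
    \<union> {\<bar>pd i (pd j f) x - pd i (pd j f) y\<bar> / norm (x - y) | i j x y.
         x \<in> unit_cube \<and> y \<in> unit_cube \<and> x \<noteq> y})"

definition strongly_convex_on_cube :: "real \<Rightarrow> (real^'d \<Rightarrow> real) \<Rightarrow> bool" where
  "strongly_convex_on_cube \<kappa> \<phi> \<longleftrightarrow>
     (\<forall>u\<in>unit_cube. \<forall>u'\<in>unit_cube.
        \<phi> ((1/2) *\<^sub>R (u + u')) \<le> (\<phi> u + \<phi> u') / 2 - \<kappa> / 8 * (norm (u - u'))\<^sup>2)"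

definition relu :: "real \<Rightarrow> real" where
  "relu x = max x 0"

definition convexity_penalty :: "real \<Rightarrow> (real^'d \<Rightarrow> real) \<Rightarrow> real" where
  "convexity_penalty \<kappa> \<phi> =
     integral (unit_cube \<times> unit_cube)
       (\<lambda>(u, u'). relu (\<phi> ((1/2) *\<^sub>R (u + u')) - (\<phi> u + \<phi> u') / 2 + \<kappa> / 8 * (norm (u - u'))\<^sup>2))"

definition H_pot :: "nat list \<Rightarrow> real \<Rightarrow> (real^'d \<Rightarrow> real) set" where
  "H_pot arch Ht = {\<phi>. is_recu_net arch \<phi> \<and> c21_norm \<phi> \<le> Ht}"

text \<open>Hessian bounds  a Id <= Hess f <= b Id on the cube (quadratic-form reading of the
  Loewner order).\<close>
definition hess_between :: "real \<Rightarrow> real \<Rightarrow> (real^'d \<Rightarrow> real) \<Rightarrow> bool" where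
  "hess_between a b f \<longleftrightarrow>
     (\<forall>x\<in>unit_cube. \<forall>v::real^'d.
        a * (norm v)\<^sup>2 \<le> (\<Sum>i\<in>UNIV. \<Sum>j\<in>UNIV. v$i * v$j * pd i (pd j f) x) \<and>
        (\<Sum>i\<in>UNIV. \<Sum>j\<in>UNIV. v$i * v$j * pd i (pd j f) x) \<le> b * (norm v)\<^sup>2)"

end

theory Submission
  imports Defs
begin

(* ReCU networks are C^2 with first and second derivatives Lipschitz on bounded sets, so the bound
   Ht on the C^{2,1} norm controls the gradient and the Lipschitz constant of the Hessian on the
   cube uniformly over the class.  If phi is not (kappa - eta)-strongly convex, a second-order
   Taylor expansion of the midpoint convexity defect yields a point xi of the cube and a unit
   vector e with e^T Hess phi(xi) e < kappa - eta.  At a scale s depending only on eta, Ht and d,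
   the pair p -+ s e (p is xi moved towards the centre of the cube) then has kappa-convexity
   defect at least s^2 eta / 4; since phi is Lipschitz on the cube, the defect stays above
   s^2 eta / 8 on the product of two cubes of side rho at this pair, and integrating over it gives
   P^(kappa)(phi) >= s^2 eta rho^(2d) / 8. *)

section \<open>Functions that are Lipschitz on bounded sets\<close>

definition lipschitz_on_bounded :: "('a::metric_space \<Rightarrow> 'b::metric_space) \<Rightarrow> bool" where
  "lipschitz_on_bounded f \<longleftrightarrow> (\<forall>U. bounded U \<longrightarrow> (\<exists>L. L-lipschitz_on U f))"

lemma lipschitz_on_boundedE:
  assumes "lipschitz_on_bounded f" "bounded U"
  obtains L where "L-lipschitz_on U f"
  using assms unfolding lipschitz_on_bounded_def by blast

lemma lipschitz_on_bounded_if_lipschitz_on_UNIV: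
  assumes "L-lipschitz_on UNIV f"
  shows "lipschitz_on_bounded f"
  using lipschitz_on_subset[OF assms] unfolding lipschitz_on_bounded_def by blast

lemma bounded_image_if_lipschitz_on_bounded:
  assumes f: "lipschitz_on_bounded f" and U: "bounded U"
  shows "bounded (f ` U)"
proof (cases "U = {}")
  case False
  then obtain x0 where x0: "x0 \<in> U" by blast
  obtain L where L: "L-lipschitz_on U f" using f U by (rule lipschitz_on_boundedE)
  obtain r where r: "\<And>x. x \<in> U \<Longrightarrow> dist x0 x \<le> r" using U bounded_any_center by metis
  have "dist (f x0) (f x) \<le> L * r" if "x \<in> U" for x
    using lipschitz_onD[OF L x0 that] r[OF that] lipschitz_on_nonneg[OF L]
    by (meson mult_left_mono order_trans)
  then show ?thesis unfolding bounded_any_center[of _ "f x0"] by blast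
qed simp

lemma lipschitz_on_bounded_const: "lipschitz_on_bounded (\<lambda>x. c)"
  by (rule lipschitz_on_bounded_if_lipschitz_on_UNIV[OF lipschitz_on_constant])

lemma lipschitz_on_bounded_inner: "lipschitz_on_bounded (\<lambda>x. a \<bullet> x)"
proof (rule lipschitz_on_bounded_if_lipschitz_on_UNIV[of "norm a"], rule lipschitz_onI)
  fix x y
  have "\<bar>a \<bullet> x - a \<bullet> y\<bar> \<le> norm a * norm (x - y)"
    by (metis Cauchy_Schwarz_ineq2 inner_diff_right)
  then show "dist (a \<bullet> x) (a \<bullet> y) \<le> norm a * dist x y" by (simp add: dist_norm dist_real_def)
qed simp

lemma lipschitz_on_bounded_pos_part: "lipschitz_on_bounded (\<lambda>t::real. max t 0)"
  by (rule lipschitz_on_bounded_if_lipschitz_on_UNIV[of 1], rule lipschitz_onI)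
     (auto simp: dist_real_def)

lemma lipschitz_on_bounded_add:
  fixes f g :: "'a::metric_space \<Rightarrow> 'b::real_normed_vector"
  assumes "lipschitz_on_bounded f" "lipschitz_on_bounded g"
  shows "lipschitz_on_bounded (\<lambda>x. f x + g x)"
  using assms lipschitz_on_add unfolding lipschitz_on_bounded_def by metis

lemma lipschitz_on_bounded_mult:
  fixes f g :: "'a::metric_space \<Rightarrow> real"
  assumes f: "lipschitz_on_bounded f" and g: "lipschitz_on_bounded g"
  shows "lipschitz_on_bounded (\<lambda>x. f x * g x)"
  unfolding lipschitz_on_bounded_def
proof (intro allI impI)
  fix U :: "'a set"
  assume U: "bounded U"
  obtain Lf Lg where Lf: "Lf-lipschitz_on U f" and Lg: "Lg-lipschitz_on U g"
    using f g U by (meson lipschitz_on_boundedE)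
  obtain Bf Bg where Bf: "\<And>x. x \<in> U \<Longrightarrow> \<bar>f x\<bar> \<le> Bf" and Bg: "\<And>x. x \<in> U \<Longrightarrow> \<bar>g x\<bar> \<le> Bg"
    using bounded_image_if_lipschitz_on_bounded[OF f U] bounded_image_if_lipschitz_on_bounded[OF g U]
    by (auto simp: bounded_real)
  have "(\<bar>Bf\<bar> * Lg + \<bar>Bg\<bar> * Lf)-lipschitz_on U (\<lambda>x. f x * g x)"
  proof (rule lipschitz_onI)
    fix x y assume xy: "x \<in> U" "y \<in> U"
    have "\<bar>f x * g x - f y * g y\<bar> = \<bar>f x * (g x - g y) + g y * (f x - f y)\<bar>"
      by (simp add: algebra_simps)
    also have "\<dots> \<le> \<bar>f x\<bar> * \<bar>g x - g y\<bar> + \<bar>g y\<bar> * \<bar>f x - f y\<bar>"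
      by (metis abs_mult abs_triangle_ineq)
    also have "\<dots> \<le> \<bar>Bf\<bar> * (Lg * dist x y) + \<bar>Bg\<bar> * (Lf * dist x y)"
      using lipschitz_onD[OF Lf xy] lipschitz_onD[OF Lg xy] Bf[OF xy(1)] Bg[OF xy(2)]
      by (intro add_mono mult_mono) (auto simp: dist_real_def)
    finally show "dist (f x * g x) (f y * g y) \<le> (\<bar>Bf\<bar> * Lg + \<bar>Bg\<bar> * Lf) * dist x y"
      by (simp add: dist_real_def algebra_simps)
  next
    show "0 \<le> \<bar>Bf\<bar> * Lg + \<bar>Bg\<bar> * Lf"
      using lipschitz_on_nonneg[OF Lf] lipschitz_on_nonneg[OF Lg] by simp
  qed
  then show "\<exists>L. L-lipschitz_on U (\<lambda>x. f x * g x)" ..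
qed

lemma lipschitz_on_bounded_power:
  fixes f :: "'a::metric_space \<Rightarrow> real"
  assumes "lipschitz_on_bounded f"
  shows "lipschitz_on_bounded (\<lambda>x. f x ^ n)"
  by (induction n) (simp_all add: lipschitz_on_bounded_const lipschitz_on_bounded_mult assms)

lemma lipschitz_on_bounded_compose:
  fixes g :: "'a::metric_space \<Rightarrow> 'b::metric_space" and h :: "'b \<Rightarrow> 'c::metric_space"
  assumes h: "lipschitz_on_bounded h" and g: "lipschitz_on_bounded g"
  shows "lipschitz_on_bounded (\<lambda>x. h (g x))"
  unfolding lipschitz_on_bounded_def
proof (intro allI impI)
  fix U :: "'a set"
  assume U: "bounded U"
  obtain Lg where "Lg-lipschitz_on U g" using g U by (rule lipschitz_on_boundedE)
  moreover obtain Lh where "Lh-lipschitz_on (g ` U) h"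
    using h bounded_image_if_lipschitz_on_bounded[OF g U] by (rule lipschitz_on_boundedE)
  ultimately show "\<exists>L. L-lipschitz_on U (\<lambda>x. h (g x))" by (blast intro: lipschitz_on_compose2)
qed

lemma lipschitz_on_bounded_scaled_pos_part_power:
  "lipschitz_on_bounded (\<lambda>t::real. c * (max t 0) ^ n)"
  by (intro lipschitz_on_bounded_mult lipschitz_on_bounded_const lipschitz_on_bounded_power
      lipschitz_on_bounded_pos_part)

lemma has_real_derivative_pos_part_power:
  assumes "2 \<le> n"
  shows "((\<lambda>t::real. (max t 0) ^ n) has_real_derivative real n * (max x 0) ^ (n - 1)) (at x)"
proof (cases x "0::real" rule: linorder_cases)
  case less
  have "((\<lambda>t. max t 0 ^ n) has_real_derivative 0) (at x)"
    by (rule has_field_derivative_transform_within_open[where f="\<lambda>t. 0" and S="{..<0}"])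
       (use less assms in auto)
  then show ?thesis using less assms by (simp add: zero_power)
next
  case equal
  have "((\<lambda>h::real. (max h 0) ^ n / h) \<longlongrightarrow> 0) (at 0)"
  proof (rule Lim_null_comparison)
    have "\<bar>max h 0 ^ n / h\<bar> \<le> \<bar>h\<bar> ^ (n - 1)" for h :: real
    proof (cases "h > 0")
      case True
      then show ?thesis using assms by (simp add: power_diff)
    qed (use assms in \<open>simp add: zero_power\<close>)
    then show "\<forall>\<^sub>F h in at 0. norm (max h 0 ^ n / h) \<le> \<bar>h\<bar> ^ (n - 1)" by simp
    have "((\<lambda>h. \<bar>h\<bar> ^ (n - 1)) \<longlongrightarrow> \<bar>0::real\<bar> ^ (n - 1)) (at 0)"
      by (intro tendsto_intros)
    moreover have "\<bar>0::real\<bar> ^ (n - 1) = 0" using assms by simp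
    ultimately show "((\<lambda>h. \<bar>h\<bar> ^ (n - 1)) \<longlongrightarrow> 0) (at (0::real))" by (simp only:)
  qed
  then show ?thesis using equal assms by (simp add: DERIV_def zero_power)
next
  case greater
  have "((\<lambda>t. max t 0 ^ n) has_real_derivative real n * x ^ (n - Suc 0)) (at x)"
    by (rule has_field_derivative_transform_within_open[OF DERIV_pow, where S="{0<..}"])
       (use greater in auto)
  then show ?thesis using greater by simp
qed

lemma recu_has_real_derivative: "(recu has_real_derivative 3 * (max x 0) ^ 2) (at x)"
  using has_real_derivative_pos_part_power[of 3 x] by (simp add: recu_def[abs_def])

lemma recu_derivative_has_real_derivative:
  "((\<lambda>t. 3 * (max t 0) ^ 2) has_real_derivative 6 * max x 0) (at x)"
  using DERIV_cmult[OF has_real_derivative_pos_part_power[of 2 x], of 3] by simp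

section \<open>Twice differentiable functions with locally Lipschitz Hessian\<close>

definition has_gradient_hessian ::
    "(real^'d \<Rightarrow> real) \<Rightarrow> (real^'d \<Rightarrow> real^'d) \<Rightarrow> (real^'d \<Rightarrow> 'd \<Rightarrow> real^'d) \<Rightarrow> bool" where
  "has_gradient_hessian f G H \<longleftrightarrow>
     (\<forall>x. (f has_derivative (\<lambda>h. G x \<bullet> h)) (at x)) \<and>
     (\<forall>x j. ((\<lambda>x. G x $ j) has_derivative (\<lambda>h. H x j \<bullet> h)) (at x))"

definition c21_loc :: "(real^'d \<Rightarrow> real) \<Rightarrow> bool" where
  "c21_loc f \<longleftrightarrow> (\<exists>G H. has_gradient_hessian f G H \<and> lipschitz_on_bounded f \<and>
     (\<forall>j. lipschitz_on_bounded (\<lambda>x. G x $ j)) \<and> (\<forall>i j. lipschitz_on_bounded (\<lambda>x. H x j $ i)))"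

lemma c21_locI:
  assumes "has_gradient_hessian f G H" "lipschitz_on_bounded f"
    "\<And>j. lipschitz_on_bounded (\<lambda>x. G x $ j)" "\<And>i j. lipschitz_on_bounded (\<lambda>x. H x j $ i)"
  shows "c21_loc f"
  using assms unfolding c21_loc_def by blast

lemma c21_locE:
  assumes "c21_loc f"
  obtains G H where "has_gradient_hessian f G H" "lipschitz_on_bounded f"
    "\<And>j. lipschitz_on_bounded (\<lambda>x. G x $ j)" "\<And>i j. lipschitz_on_bounded (\<lambda>x. H x j $ i)"
  using assms unfolding c21_loc_def by auto

lemma c21_loc_affine: "c21_loc (\<lambda>x. a \<bullet> x + b)"
proof (rule c21_locI[where G="\<lambda>x. a" and H="\<lambda>x j. 0"])
  show "has_gradient_hessian (\<lambda>x. a \<bullet> x + b) (\<lambda>x. a) (\<lambda>x j. 0)"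
    unfolding has_gradient_hessian_def by (auto intro!: derivative_eq_intros)
qed (auto intro: lipschitz_on_bounded_add lipschitz_on_bounded_inner lipschitz_on_bounded_const)

lemma c21_loc_const: "c21_loc (\<lambda>x. c)"
  using c21_loc_affine[of 0 c] by simp

lemma c21_loc_add:
  assumes "c21_loc f" "c21_loc g"
  shows "c21_loc (\<lambda>x. f x + g x)"
proof -
  obtain G1 H1 where 1: "has_gradient_hessian f G1 H1" "lipschitz_on_bounded f"
    "\<And>j. lipschitz_on_bounded (\<lambda>x. G1 x $ j)" "\<And>i j. lipschitz_on_bounded (\<lambda>x. H1 x j $ i)"
    using assms(1) by (rule c21_locE) blast
  obtain G2 H2 where 2: "has_gradient_hessian g G2 H2" "lipschitz_on_bounded g"
    "\<And>j. lipschitz_on_bounded (\<lambda>x. G2 x $ j)" "\<And>i j. lipschitz_on_bounded (\<lambda>x. H2 x j $ i)"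
    using assms(2) by (rule c21_locE) blast
  show ?thesis
  proof (rule c21_locI[where G="\<lambda>x. G1 x + G2 x" and H="\<lambda>x j. H1 x j + H2 x j"])
    show "has_gradient_hessian (\<lambda>x. f x + g x) (\<lambda>x. G1 x + G2 x) (\<lambda>x j. H1 x j + H2 x j)"
      using 1(1) 2(1) unfolding has_gradient_hessian_def
      by (auto intro!: derivative_eq_intros simp: inner_add_left)
  qed (use 1 2 in \<open>auto intro: lipschitz_on_bounded_add\<close>)
qed

lemma c21_loc_cmult:
  assumes "c21_loc f"
  shows "c21_loc (\<lambda>x. c * f x)"
proof -
  obtain G H where f: "has_gradient_hessian f G H" "lipschitz_on_bounded f"
    "\<And>j. lipschitz_on_bounded (\<lambda>x. G x $ j)" "\<And>i j. lipschitz_on_bounded (\<lambda>x. H x j $ i)"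
    using assms by (rule c21_locE) blast
  show ?thesis
  proof (rule c21_locI[where G="\<lambda>x. c *\<^sub>R G x" and H="\<lambda>x j. c *\<^sub>R H x j"])
    show "has_gradient_hessian (\<lambda>x. c * f x) (\<lambda>x. c *\<^sub>R G x) (\<lambda>x j. c *\<^sub>R H x j)"
      using f(1) unfolding has_gradient_hessian_def by (auto intro!: derivative_eq_intros)
  qed (use f in \<open>auto intro: lipschitz_on_bounded_mult lipschitz_on_bounded_const\<close>)
qed

lemma c21_loc_sum:
  assumes "\<And>k. k \<in> S \<Longrightarrow> c21_loc (f k)"
  shows "c21_loc (\<lambda>x. \<Sum>k\<in>S. f k x)"
  using assms
proof (induction S rule: infinite_finite_induct)
  case (insert k S)
  then show ?case by (simp add: c21_loc_add)
qed (simp_all add: c21_loc_const)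

lemma c21_loc_recu:
  assumes "c21_loc f"
  shows "c21_loc (\<lambda>x. recu (f x))"
proof -
  obtain G H where f: "has_gradient_hessian f G H" "lipschitz_on_bounded f"
    "\<And>j. lipschitz_on_bounded (\<lambda>x. G x $ j)" "\<And>i j. lipschitz_on_bounded (\<lambda>x. H x j $ i)"
    using assms by (rule c21_locE) blast
  have df: "\<And>x. (f has_derivative (\<lambda>h. G x \<bullet> h)) (at x)"
    and dG: "\<And>x j. ((\<lambda>x. G x $ j) has_derivative (\<lambda>h. H x j \<bullet> h)) (at x)"
    using f(1) unfolding has_gradient_hessian_def by blast+
  define r1 where "r1 t = 3 * (max t 0) ^ 2" for t :: real
  define r2 where "r2 t = 6 * max t 0" for t :: real
  have r1: "(recu has_real_derivative r1 t) (at t)" for t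
    unfolding r1_def by (rule recu_has_real_derivative)
  have r2: "(r1 has_real_derivative r2 t) (at t)" for t
    unfolding r1_def[abs_def] r2_def by (rule recu_derivative_has_real_derivative)
  have lip: "lipschitz_on_bounded recu" "lipschitz_on_bounded r1" "lipschitz_on_bounded r2"
    using lipschitz_on_bounded_scaled_pos_part_power[of 1 3] lipschitz_on_bounded_scaled_pos_part_power[of 3 2]
      lipschitz_on_bounded_scaled_pos_part_power[of 6 1]
    by (simp_all add: recu_def[abs_def] r1_def[abs_def] r2_def[abs_def])
  have d1: "((\<lambda>x. recu (f x)) has_derivative (\<lambda>h. (r1 (f x) *\<^sub>R G x) \<bullet> h)) (at x)" for x
    using has_derivative_compose[OF df r1[unfolded has_field_derivative_def]]
    by (simp add: inner_scaleR_left)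
  have d2: "((\<lambda>x. (r1 (f x) *\<^sub>R G x) $ j) has_derivative
      (\<lambda>h. ((r2 (f x) * G x $ j) *\<^sub>R G x + r1 (f x) *\<^sub>R H x j) \<bullet> h)) (at x)" for x j
  proof -
    have "((\<lambda>x. r1 (f x)) has_derivative (\<lambda>h. r2 (f x) * (G x \<bullet> h))) (at x)"
      using has_derivative_compose[OF df r2[unfolded has_field_derivative_def]]
      by simp
    from has_derivative_mult[OF this dG]
    show ?thesis by (simp add: inner_add_left inner_scaleR_left algebra_simps)
  qed
  show ?thesis
  proof (rule c21_locI[where G="\<lambda>x. r1 (f x) *\<^sub>R G x"
        and H="\<lambda>x j. (r2 (f x) * G x $ j) *\<^sub>R G x + r1 (f x) *\<^sub>R H x j"])
    show "has_gradient_hessian (\<lambda>x. recu (f x)) (\<lambda>x. r1 (f x) *\<^sub>R G x)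
        (\<lambda>x j. (r2 (f x) * G x $ j) *\<^sub>R G x + r1 (f x) *\<^sub>R H x j)"
      unfolding has_gradient_hessian_def using d1 d2 by blast
  next
    show "lipschitz_on_bounded (\<lambda>x. recu (f x))"
      using lip(1) f(2) by (rule lipschitz_on_bounded_compose)
  next
    have r1f: "lipschitz_on_bounded (\<lambda>x. r1 (f x))" and r2f: "lipschitz_on_bounded (\<lambda>x. r2 (f x))"
      using lip(2,3) f(2) by (auto intro: lipschitz_on_bounded_compose)
    fix i j
    show "lipschitz_on_bounded (\<lambda>x. (r1 (f x) *\<^sub>R G x) $ j)"
      using lipschitz_on_bounded_mult[OF r1f f(3)] by simp
    show "lipschitz_on_bounded (\<lambda>x. ((r2 (f x) * G x $ j) *\<^sub>R G x + r1 (f x) *\<^sub>R H x j) $ i)"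
      using lipschitz_on_bounded_add[OF lipschitz_on_bounded_mult[OF lipschitz_on_bounded_mult[OF r2f f(3)] f(3)]
          lipschitz_on_bounded_mult[OF r1f f(4)]]
      by simp
  qed
qed

lemma hidden_eval_trivial:
  assumes "ps = [] \<or> length arch < 2"
  shows "hidden_eval \<sigma> arch ps z = z"
  using assms by (cases "(\<sigma>, arch, ps, z)" rule: hidden_eval.cases) auto

lemma c21_loc_affine_layer:
  assumes "\<And>i. c21_loc (\<lambda>x. y x i)"
  shows "c21_loc (\<lambda>x. affine_layer n W B (y x) k)"
  unfolding affine_layer_def by (intro c21_loc_add c21_loc_const c21_loc_sum c21_loc_cmult assms)

lemma c21_loc_hidden_eval:
  assumes "\<And>i. c21_loc (\<lambda>x. y x i)"
  shows "c21_loc (\<lambda>x. hidden_eval recu arch ps (y x) k)"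
  using assms
proof (induction ps arbitrary: arch y k)
  case Nil
  then show ?case by (simp add: hidden_eval_trivial)
next
  case (Cons p ps)
  obtain W B where p: "p = (W, B)" by (cases p)
  show ?case
  proof (cases "length arch < 2")
    case True
    then show ?thesis using Cons.prems by (simp add: hidden_eval_trivial)
  next
    case False
    then obtain n m ns where arch: "arch = n # m # ns"
      by (cases arch; cases "tl arch") auto
    have "c21_loc (\<lambda>x. hidden_eval recu (m # ns) ps (\<lambda>i. recu (affine_layer n W B (y x) i)) k)"
      by (rule Cons.IH) (intro c21_loc_recu c21_loc_affine_layer Cons.prems)
    then show ?thesis
      using Cons.prems by (cases "ns = []") (simp_all add: arch p c21_loc_affine_layer)
  qed
qed

lemma c21_loc_if_recu_net:
  assumes "is_recu_net arch f"
  shows "c21_loc f"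
proof -
  obtain W1 B1 ps where f: "f = net_realization recu arch W1 B1 ps"
    using assms unfolding is_recu_net_def by fast
  have "c21_loc (\<lambda>x. hidden_eval recu (tl arch) ps (\<lambda>i. recu (W1 i \<bullet> x + B1 i)) 0)"
    by (intro c21_loc_hidden_eval c21_loc_recu c21_loc_affine)
  then show ?thesis
    unfolding f net_realization_def[abs_def] by (cases "length arch = 2") (simp_all add: c21_loc_affine)
qed

lemma sum_Basis_vec_nth [simp]: "(\<Sum>b\<in>(Basis :: (real^'d) set). b $ i) = 1"
proof -
  have "axis i (1::real) \<in> Basis" by simp
  then have "(One :: real^'d) $ i = 1" by (metis cart_eq_inner_axis inner_sum_Basis)
  then show ?thesis by (simp only: sum_component)
qed

lemma mem_unit_cube_iff: "x \<in> unit_cube \<longleftrightarrow> (\<forall>i. 0 \<le> x $ i \<and> x $ i \<le> 1)"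
  by (simp add: unit_cube_def mem_box_cart)

lemma bounded_unit_cube: "bounded unit_cube"
  by (simp add: unit_cube_def)

lemma convex_unit_cube: "convex unit_cube"
  by (simp add: unit_cube_def)

lemma norm_le_card_mult:
  fixes x :: "real^'d"
  assumes "\<And>i. \<bar>x $ i\<bar> \<le> c"
  shows "norm x \<le> real CARD('d) * c"
proof -
  have "norm x \<le> (\<Sum>i\<in>UNIV. \<bar>x $ i\<bar>)" by (rule norm_le_l1_cart)
  also have "\<dots> \<le> (\<Sum>i\<in>(UNIV::'d set). c)" using assms by (intro sum_mono) auto
  finally show ?thesis by simp
qed

lemma norm_diff_le_card_if_in_unit_cube:
  fixes u v :: "real^'d"
  assumes "u \<in> unit_cube" "v \<in> unit_cube"
  shows "norm (u - v) \<le> real CARD('d)"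
proof -
  have "\<bar>(u - v) $ i\<bar> \<le> 1" for i
  proof -
    have "0 \<le> u $ i" "u $ i \<le> 1" "0 \<le> v $ i" "v $ i \<le> 1"
      using assms by (auto simp: mem_unit_cube_iff)
    then show ?thesis by simp
  qed
  then show ?thesis using norm_le_card_mult[of "u - v" 1] by simp
qed

lemma cbox_subset_unit_cube:
  fixes a :: "real^'d"
  assumes "\<And>i. 0 \<le> a $ i" "\<And>i. a $ i + \<rho> \<le> 1"
  shows "cbox a (a + \<rho> *\<^sub>R One) \<subseteq> unit_cube"
proof
  fix u assume "u \<in> cbox a (a + \<rho> *\<^sub>R One)"
  then have u: "a $ i \<le> u $ i \<and> u $ i \<le> a $ i + \<rho>" for i by (simp add: mem_box_cart)
  have "0 \<le> u $ i \<and> u $ i \<le> 1" for i using u[of i] assms[of i] by linarith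
  then show "u \<in> unit_cube" by (simp add: mem_unit_cube_iff)
qed

lemma measure_cbox_cube:
  fixes a :: "real^'d"
  assumes "0 \<le> \<rho>"
  shows "measure lborel (cbox a (a + \<rho> *\<^sub>R One)) = \<rho> ^ CARD('d)"
proof -
  have "a \<in> cbox a (a + \<rho> *\<^sub>R One)" using assms by (simp add: mem_box_cart)
  then show ?thesis by (subst content_cbox_cart) auto
qed

lemma pd_eq_component_if_has_derivative:
  assumes "(f has_derivative (\<lambda>h. g \<bullet> h)) (at x)"
  shows "pd i f x = g $ i"
proof -
  have "((\<lambda>t::real. x + t *\<^sub>R axis i 1) has_derivative (\<lambda>t. t *\<^sub>R axis i 1)) (at 0)"
    by (auto intro!: derivative_eq_intros)
  moreover have "(f has_derivative (\<lambda>h. g \<bullet> h)) (at (x + 0 *\<^sub>R axis i 1))"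
    using assms by simp
  ultimately have "((\<lambda>t. f (x + t *\<^sub>R axis i 1)) has_derivative (\<lambda>t. g \<bullet> (t *\<^sub>R axis i 1))) (at 0)"
    by (rule has_derivative_compose)
  then have "((\<lambda>t. f (x + t *\<^sub>R axis i 1)) has_field_derivative g $ i) (at 0)"
    unfolding has_field_derivative_def by (rule has_derivative_eq_rhs) (auto simp: inner_axis)
  then show ?thesis
    unfolding pd_def by (rule DERIV_imp_deriv)
qed

lemma pd_eq_gradient_hessian:
  assumes "has_gradient_hessian f G H"
  shows "pd i f x = G x $ i" "pd i (pd j f) x = H x j $ i"
proof -
  have pd1: "pd j f = (\<lambda>x. G x $ j)" for j
    using assms pd_eq_component_if_has_derivative unfolding has_gradient_hessian_def by blast
  then show "pd i f x = G x $ i" by simp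
  show "pd i (pd j f) x = H x j $ i"
    unfolding pd1 using assms pd_eq_component_if_has_derivative unfolding has_gradient_hessian_def by blast
qed

lemma bdd_above_abs_image_unit_cube:
  fixes g :: "real^'d \<Rightarrow> real"
  assumes "lipschitz_on_bounded g"
  shows "bdd_above ((\<lambda>x. \<bar>g x\<bar>) ` unit_cube)"
proof -
  obtain a where "\<And>x. x \<in> unit_cube \<Longrightarrow> \<bar>g x\<bar> \<le> a"
    using bounded_image_if_lipschitz_on_bounded[OF assms bounded_unit_cube] by (auto simp: bounded_real)
  then show ?thesis by (rule bdd_aboveI2)
qed

text \<open>The supremum in \<^const>\<open>c21_norm\<close> is only meaningful for a set that is bounded above;
  this is where the Lipschitz bounds of \<^const>\<open>c21_loc\<close> on the cube are needed.\<close>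

lemma c21_norm_bounds:
  fixes f :: "real^'d \<Rightarrow> real"
  assumes fGH: "has_gradient_hessian f G H" and f: "lipschitz_on_bounded f"
    and G: "\<And>j. lipschitz_on_bounded (\<lambda>x. G x $ j)" and H: "\<And>i j. lipschitz_on_bounded (\<lambda>x. H x j $ i)"
    and norm: "c21_norm f \<le> Ht"
  shows "\<And>x i. x \<in> unit_cube \<Longrightarrow> \<bar>G x $ i\<bar> \<le> Ht"
    and "\<And>x y i j. x \<in> unit_cube \<Longrightarrow> y \<in> unit_cube \<Longrightarrow> \<bar>H x j $ i - H y j $ i\<bar> \<le> Ht * norm (x - y)"
proof -
  define Q where "Q = (\<Union>i. \<Union>j. {\<bar>H x j $ i - H y j $ i\<bar> / norm (x - y) | x y.
    x \<in> unit_cube \<and> y \<in> unit_cube \<and> x \<noteq> y})"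
  define S where "S = (\<lambda>x. \<bar>f x\<bar>) ` unit_cube \<union> (\<Union>i. (\<lambda>x. \<bar>G x $ i\<bar>) ` unit_cube)
    \<union> (\<Union>i. \<Union>j. (\<lambda>x. \<bar>H x j $ i\<bar>) ` unit_cube) \<union> Q"
  have "{\<bar>f x\<bar> | x. x \<in> unit_cube} = (\<lambda>x. \<bar>f x\<bar>) ` unit_cube"
    and "{\<bar>pd i f x\<bar> | i x. x \<in> unit_cube} = (\<Union>i. (\<lambda>x. \<bar>G x $ i\<bar>) ` unit_cube)"
    and "{\<bar>pd i (pd j f) x\<bar> | i j x. x \<in> unit_cube} = (\<Union>i. \<Union>j. (\<lambda>x. \<bar>H x j $ i\<bar>) ` unit_cube)"
    and "{\<bar>pd i (pd j f) x - pd i (pd j f) y\<bar> / norm (x - y) | i j x y.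
         x \<in> unit_cube \<and> y \<in> unit_cube \<and> x \<noteq> y} = Q"
    unfolding Q_def by (auto simp: pd_eq_gradient_hessian[OF fGH])
  then have "c21_norm f = Sup S"
    unfolding c21_norm_def S_def by simp
  have "bdd_above {\<bar>H x j $ i - H y j $ i\<bar> / norm (x - y) | x y.
    x \<in> unit_cube \<and> y \<in> unit_cube \<and> x \<noteq> y}" for i j
  proof -
    obtain L where L: "L-lipschitz_on unit_cube (\<lambda>x. H x j $ i)"
      using H bounded_unit_cube by (rule lipschitz_on_boundedE)
    have "\<bar>H x j $ i - H y j $ i\<bar> / norm (x - y) \<le> L"
      if "x \<in> unit_cube" "y \<in> unit_cube" "x \<noteq> y" for x y
      using lipschitz_on_normD[OF L that(1,2)] that(3) by (simp add: divide_le_eq)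
    then show ?thesis by (intro bdd_aboveI[where M=L]) blast
  qed
  then have "bdd_above S"
    unfolding S_def Q_def using bdd_above_abs_image_unit_cube[OF f] bdd_above_abs_image_unit_cube[OF G]
      bdd_above_abs_image_unit_cube[OF H] by simp
  then have le_Ht: "s \<le> Ht" if "s \<in> S" for s
    using cSup_upper[OF that] \<open>c21_norm f = Sup S\<close> norm by linarith
  show "\<bar>G x $ i\<bar> \<le> Ht" if "x \<in> unit_cube" for x i
    using that by (intro le_Ht) (unfold S_def, blast)
  show "\<bar>H x j $ i - H y j $ i\<bar> \<le> Ht * norm (x - y)" if x: "x \<in> unit_cube" and y: "y \<in> unit_cube" for x y i j
  proof (cases "x = y")
    case False
    then have "\<bar>H x j $ i - H y j $ i\<bar> / norm (x - y) \<in> Q"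
      unfolding Q_def using x y by blast
    then have "\<bar>H x j $ i - H y j $ i\<bar> / norm (x - y) \<le> Ht"
      by (intro le_Ht) (simp add: S_def)
    then show ?thesis using False by (simp add: divide_le_eq mult.commute)
  qed simp
qed

section \<open>Second-order expansion of the convexity defect\<close>

definition hessian_form :: "(real^'d \<Rightarrow> 'd \<Rightarrow> real^'d) \<Rightarrow> real^'d \<Rightarrow> real^'d \<Rightarrow> real" where
  "hessian_form H x v = (\<Sum>i\<in>UNIV. \<Sum>j\<in>UNIV. v $ i * v $ j * H x j $ i)"

lemma hessian_form_scaleR: "hessian_form H x (c *\<^sub>R v) = c\<^sup>2 * hessian_form H x v"
  by (simp add: hessian_form_def sum_distrib_left power2_eq_square algebra_simps)

lemma hessian_form_zero [simp]: "hessian_form H x 0 = 0"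
  by (simp add: hessian_form_def)

lemma hessian_form_diff_le:
  fixes H :: "real^'d \<Rightarrow> 'd \<Rightarrow> real^'d"
  assumes "\<And>i j. \<bar>H x j $ i - H y j $ i\<bar> \<le> C"
  shows "\<bar>hessian_form H x v - hessian_form H y v\<bar> \<le> real CARD('d)^2 * C * (norm v)\<^sup>2"
proof -
  have "0 \<le> C" using assms[of undefined undefined] by linarith
  have "\<bar>hessian_form H x v - hessian_form H y v\<bar>
      = \<bar>\<Sum>i\<in>UNIV. \<Sum>j\<in>UNIV. v $ i * v $ j * (H x j $ i - H y j $ i)\<bar>"
    by (simp add: hessian_form_def sum_subtractf algebra_simps)
  also have "\<dots> \<le> (\<Sum>i\<in>(UNIV::'d set). \<Sum>j\<in>(UNIV::'d set). norm v * norm v * C)"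
    by (rule order_trans[OF sum_abs], rule sum_mono, rule order_trans[OF sum_abs], rule sum_mono)
       (use \<open>0 \<le> C\<close> in \<open>auto simp: abs_mult intro!: mult_mono component_le_norm_cart assms\<close>)
  also have "\<dots> = real CARD('d)^2 * C * (norm v)\<^sup>2"
    by (simp add: power2_eq_square)
  finally show ?thesis .
qed

lemma has_real_derivative_along_line:
  assumes "\<And>x. (f has_derivative (\<lambda>h. g x \<bullet> h)) (at x)"
  shows "((\<lambda>t. f (m + t *\<^sub>R w)) has_real_derivative g (m + t *\<^sub>R w) \<bullet> w) (at t)"
proof -
  have "((\<lambda>t::real. m + t *\<^sub>R w) has_derivative (\<lambda>t. t *\<^sub>R w)) (at t)"
    by (auto intro!: derivative_eq_intros)
  from has_derivative_compose[OF this assms]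
  show ?thesis
    unfolding has_field_derivative_def by (rule has_derivative_eq_rhs) (auto simp: fun_eq_iff)
qed

lemma second_difference_eq_hessian_form:
  assumes "has_gradient_hessian f G H"
  obtains t1 t2 where "\<bar>t1\<bar> \<le> 1" "\<bar>t2\<bar> \<le> 1"
    "f (m + w) + f (m - w) - 2 * f m =
       (hessian_form H (m + t1 *\<^sub>R w) w + hessian_form H (m + t2 *\<^sub>R w) w) / 2"
proof -
  define F :: "nat \<Rightarrow> real \<Rightarrow> real" where
    "F n t = (if n = 0 then f (m + t *\<^sub>R w) else if n = 1 then G (m + t *\<^sub>R w) \<bullet> w
       else hessian_form H (m + t *\<^sub>R w) w)" for n t
  have F0: "(F 0 has_real_derivative F 1 t) (at t)" for t
    using assms has_real_derivative_along_line[of f G m w t]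
    unfolding F_def has_gradient_hessian_def by simp
  have F1: "(F 1 has_real_derivative F 2 t) (at t)" for t
  proof -
    have F1_eq: "F 1 = (\<lambda>t. \<Sum>j\<in>UNIV. G (m + t *\<^sub>R w) $ j * w $ j)"
      by (simp add: F_def fun_eq_iff inner_vec_def)
    have "((\<lambda>t. \<Sum>j\<in>UNIV. G (m + t *\<^sub>R w) $ j * w $ j) has_real_derivative
        (\<Sum>j\<in>UNIV. (H (m + t *\<^sub>R w) j \<bullet> w) * w $ j)) (at t)"
      using assms unfolding has_gradient_hessian_def
      by (intro DERIV_sum DERIV_cmult_right has_real_derivative_along_line[where f="\<lambda>x. G x $ _"]) blast
    moreover have "(\<Sum>j\<in>UNIV. (H (m + t *\<^sub>R w) j \<bullet> w) * w $ j) = F 2 t"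
      unfolding F_def hessian_form_def inner_vec_def
      by (subst sum.swap) (simp add: sum_distrib_left sum_distrib_right algebra_simps)
    ultimately show ?thesis unfolding F1_eq by simp
  qed
  have derivs: "\<forall>n t. n < 2 \<and> P t \<longrightarrow> (F n has_real_derivative F (Suc n) t) (at t)" for P
  proof (intro allI impI)
    fix n :: nat and t :: real
    assume "n < 2 \<and> P t"
    then have "n = 0 \<or> n = 1" by auto
    then show "(F n has_real_derivative F (Suc n) t) (at t)" using F0 F1 by (auto simp: numeral_2_eq_2)
  qed
  obtain t1 where t1: "0 < t1" "t1 < 1"
    "F 0 1 = (\<Sum>n<2. F n 0 / fact n * 1 ^ n) + F 2 t1 / fact 2 * 1 ^ 2"
    using Maclaurin[of 1 2 F "F 0"] derivs by auto
  obtain t2 where t2: "-1 < t2" "t2 < 0"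
    "F 0 (-1) = (\<Sum>n<2. F n 0 / fact n * (-1) ^ n) + F 2 t2 / fact 2 * (-1) ^ 2"
    using Maclaurin_minus[of "-1" 2 F "F 0"] derivs by auto
  have "f (m + w) + f (m - w) - 2 * f m = (F 2 t1 + F 2 t2) / 2"
    using t1(3) t2(3) by (simp add: F_def numeral_2_eq_2 lessThan_Suc)
  then show ?thesis using t1 t2 by (intro that[of t1 t2]) (auto simp: F_def)
qed

definition convexity_defect :: "real \<Rightarrow> (real^'d \<Rightarrow> real) \<Rightarrow> real^'d \<Rightarrow> real^'d \<Rightarrow> real" where
  "convexity_defect \<kappa> f u u' = f ((1/2) *\<^sub>R (u + u')) - (f u + f u') / 2 + \<kappa> / 8 * (norm (u - u'))\<^sup>2"

lemma strongly_convex_on_cube_iff_convexity_defect: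
  "strongly_convex_on_cube \<kappa> f \<longleftrightarrow> (\<forall>u\<in>unit_cube. \<forall>u'\<in>unit_cube. convexity_defect \<kappa> f u u' \<le> 0)"
proof -
  have "a \<le> b - c \<longleftrightarrow> a - b + c \<le> 0" for a b c :: real by linarith
  then show ?thesis unfolding strongly_convex_on_cube_def convexity_defect_def by (simp only:)
qed

lemma convexity_penalty_eq_integral_convexity_defect:
  "convexity_penalty \<kappa> f = integral (unit_cube \<times> unit_cube) (\<lambda>(u, u'). relu (convexity_defect \<kappa> f u u'))"
  by (simp add: convexity_penalty_def convexity_defect_def)

lemma convexity_defect_eq_hessian_form:
  assumes "has_gradient_hessian f G H"
  obtains t1 t2 where "\<bar>t1\<bar> \<le> 1" "\<bar>t2\<bar> \<le> 1"
    "convexity_defect \<kappa> f (m - w) (m + w) =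
       \<kappa> / 2 * (norm w)\<^sup>2 - (hessian_form H (m + t1 *\<^sub>R w) w + hessian_form H (m + t2 *\<^sub>R w) w) / 4"
proof -
  obtain t1 t2 where t: "\<bar>t1\<bar> \<le> 1" "\<bar>t2\<bar> \<le> 1"
    "f (m + w) + f (m - w) - 2 * f m =
       (hessian_form H (m + t1 *\<^sub>R w) w + hessian_form H (m + t2 *\<^sub>R w) w) / 2"
    using assms by (rule second_difference_eq_hessian_form)
  have "(1/2) *\<^sub>R ((m - w) + (m + w)) = m" by (simp add: scaleR_2 flip: scaleR_right_distrib)
  moreover have "(norm ((m - w) - (m + w)))\<^sup>2 = 4 * (norm w)\<^sup>2"
    using norm_scaleR[of 2 w] by (simp add: power2_eq_square flip: scaleR_2)
  ultimately show ?thesis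
    using t by (intro that[of t1 t2]) (auto simp: convexity_defect_def field_simps)
qed

lemma add_scaleR_mem_unit_cube:
  assumes "m - w \<in> unit_cube" "m + w \<in> unit_cube" "\<bar>t\<bar> \<le> 1"
  shows "m + t *\<^sub>R w \<in> unit_cube"
proof -
  have "m + t *\<^sub>R w = ((1 - t) / 2) *\<^sub>R (m - w) + ((1 + t) / 2) *\<^sub>R (m + w)"
    by (simp add: vec_eq_iff field_simps)
  moreover have "((1 - t) / 2) *\<^sub>R (m - w) + ((1 + t) / 2) *\<^sub>R (m + w) \<in> unit_cube"
    by (rule convexD[OF convex_unit_cube assms(1,2)]) (use assms(3) in \<open>auto simp: field_simps\<close>)
  ultimately show ?thesis by simp
qed

lemma hessian_form_lt_if_not_strongly_convex:
  assumes fGH: "has_gradient_hessian f G H" and not_convex: "\<not> strongly_convex_on_cube k f"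
  obtains \<xi> e where "\<xi> \<in> unit_cube" "norm e = 1" "hessian_form H \<xi> e < k"
proof -
  obtain u u' where uu': "u \<in> unit_cube" "u' \<in> unit_cube" and "0 < convexity_defect k f u u'"
    using not_convex by (auto simp: strongly_convex_on_cube_iff_convexity_defect not_le)
  define m where "m = (1/2) *\<^sub>R (u + u')"
  define w where "w = (1/2) *\<^sub>R (u' - u)"
  have u: "u = m - w" "u' = m + w"
    by (simp_all add: m_def w_def vec_eq_iff field_simps)
  obtain t1 t2 where t: "\<bar>t1\<bar> \<le> 1" "\<bar>t2\<bar> \<le> 1"
    "convexity_defect k f (m - w) (m + w) =
       k / 2 * (norm w)\<^sup>2 - (hessian_form H (m + t1 *\<^sub>R w) w + hessian_form H (m + t2 *\<^sub>R w) w) / 4"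
    using fGH by (rule convexity_defect_eq_hessian_form)
  have "hessian_form H (m + t1 *\<^sub>R w) w + hessian_form H (m + t2 *\<^sub>R w) w < 2 * (k * (norm w)\<^sup>2)"
    using \<open>0 < convexity_defect k f u u'\<close> t(3) u by simp
  then obtain t where "\<bar>t\<bar> \<le> 1" and t_lt: "hessian_form H (m + t *\<^sub>R w) w < k * (norm w)\<^sup>2"
    using t(1,2) by (cases "hessian_form H (m + t1 *\<^sub>R w) w < k * (norm w)\<^sup>2") auto
  then have "w \<noteq> 0" by auto
  have "m + t *\<^sub>R w \<in> unit_cube"
    using uu' \<open>\<bar>t\<bar> \<le> 1\<close> unfolding u by (rule add_scaleR_mem_unit_cube)
  moreover have "norm ((1 / norm w) *\<^sub>R w) = 1" using \<open>w \<noteq> 0\<close> by simp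
  moreover have "hessian_form H (m + t *\<^sub>R w) ((1 / norm w) *\<^sub>R w) < k"
    using t_lt \<open>w \<noteq> 0\<close> by (simp add: hessian_form_scaleR field_simps)
  ultimately show ?thesis by (rule that)
qed

section \<open>Lower bound for the convexity penalty\<close>

lemma lipschitz_on_unit_cube_if_gradient_bounded:
  fixes f :: "real^'d \<Rightarrow> real"
  assumes "\<And>x. (f has_derivative (\<lambda>h. G x \<bullet> h)) (at x)"
    and "\<And>x i. x \<in> unit_cube \<Longrightarrow> \<bar>G x $ i\<bar> \<le> C" and "0 \<le> C"
  shows "(real CARD('d) * C)-lipschitz_on unit_cube f"
proof (rule bounded_derivative_imp_lipschitz[OF _ convex_unit_cube])
  fix x :: "real^'d"
  assume x: "x \<in> unit_cube"
  show "(f has_derivative (\<lambda>h. G x \<bullet> h)) (at x within unit_cube)"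
    using assms(1) by (rule has_derivative_at_withinI)
  have "onorm (\<lambda>h. G x \<bullet> h) \<le> norm (G x)"
    using onorm_inner_right[OF bounded_linear_ident, of "G x"] by (simp add: onorm_id)
  also have "\<dots> \<le> real CARD('d) * C"
    using assms(2)[OF x] by (rule norm_le_card_mult)
  finally show "onorm (\<lambda>h. G x \<bullet> h) \<le> real CARD('d) * C" .
qed (use assms(3) in simp)

lemma convexity_defect_ge_along_direction:
  fixes f :: "real^'d \<Rightarrow> real"
  assumes fGH: "has_gradient_hessian f G H"
    and H_lip: "\<And>x y i j. x \<in> unit_cube \<Longrightarrow> y \<in> unit_cube \<Longrightarrow>
      \<bar>H x j $ i - H y j $ i\<bar> \<le> C * norm (x - y)"
    and "0 \<le> C"
    and ends: "m - s *\<^sub>R e \<in> unit_cube" "m + s *\<^sub>R e \<in> unit_cube"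
    and \<xi>: "\<xi> \<in> unit_cube" and e: "norm e = 1" and e_\<xi>: "hessian_form H \<xi> e < \<kappa> - \<eta>"
    and r: "norm (m - \<xi>) + \<bar>s\<bar> \<le> r" "real CARD('d)^2 * C * r \<le> \<eta> / 2"
  shows "s\<^sup>2 * \<eta> / 4 \<le> convexity_defect \<kappa> f (m - s *\<^sub>R e) (m + s *\<^sub>R e)"
proof -
  have near: "hessian_form H (m + t *\<^sub>R (s *\<^sub>R e)) (s *\<^sub>R e) \<le> s\<^sup>2 * (\<kappa> - \<eta> / 2)"
    if "\<bar>t\<bar> \<le> 1" for t
  proof -
    define y where "y = m + t *\<^sub>R (s *\<^sub>R e)"
    have y: "y \<in> unit_cube" unfolding y_def using ends that by (rule add_scaleR_mem_unit_cube)
    have "norm (y - \<xi>) \<le> norm (m - \<xi>) + \<bar>t\<bar> * \<bar>s\<bar>"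
      using norm_triangle_ineq[of "m - \<xi>" "t *\<^sub>R (s *\<^sub>R e)"] e by (simp add: y_def algebra_simps abs_mult)
    also have "\<dots> \<le> r"
      using r(1) mult_left_le_one_le[of "\<bar>s\<bar>" "\<bar>t\<bar>"] that by simp
    finally have "real CARD('d)^2 * C * norm (y - \<xi>) \<le> \<eta> / 2"
      using r(2) \<open>0 \<le> C\<close> by (meson mult_left_mono order_trans zero_le_mult_iff zero_le_power2 of_nat_0_le_iff)
    moreover have "\<bar>hessian_form H y e - hessian_form H \<xi> e\<bar>
        \<le> real CARD('d)^2 * (C * norm (y - \<xi>)) * (norm e)\<^sup>2"
      using H_lip[OF y \<xi>] by (rule hessian_form_diff_le)
    ultimately have "hessian_form H y e \<le> \<kappa> - \<eta> / 2" using e e_\<xi> by (simp add: mult.assoc)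
    then show ?thesis
      unfolding y_def[symmetric] hessian_form_scaleR by (intro mult_left_mono) auto
  qed
  obtain t1 t2 where t: "\<bar>t1\<bar> \<le> 1" "\<bar>t2\<bar> \<le> 1"
    "convexity_defect \<kappa> f (m - s *\<^sub>R e) (m + s *\<^sub>R e) = \<kappa> / 2 * (norm (s *\<^sub>R e))\<^sup>2 -
       (hessian_form H (m + t1 *\<^sub>R (s *\<^sub>R e)) (s *\<^sub>R e) + hessian_form H (m + t2 *\<^sub>R (s *\<^sub>R e)) (s *\<^sub>R e)) / 4"
    using fGH by (rule convexity_defect_eq_hessian_form)
  then show ?thesis using near[OF t(1)] near[OF t(2)] e by (simp add: field_simps; linarith)
qed

lemma convexity_defect_lipschitz:
  fixes f :: "real^'d \<Rightarrow> real"
  assumes f: "L-lipschitz_on unit_cube f" and "0 \<le> \<kappa>"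
    and cube: "u \<in> unit_cube" "u' \<in> unit_cube" "v \<in> unit_cube" "v' \<in> unit_cube"
  shows "\<bar>convexity_defect \<kappa> f u u' - convexity_defect \<kappa> f v v'\<bar>
    \<le> (L + \<kappa> * real CARD('d) / 4) * (norm (u - v) + norm (u' - v'))"
proof -
  define \<delta> where "\<delta> = norm (u - v) + norm (u' - v')"
  have mid: "(1/2) *\<^sub>R (u + u') \<in> unit_cube" "(1/2) *\<^sub>R (v + v') \<in> unit_cube"
    using convexD[OF convex_unit_cube, of _ _ "1/2" "1/2"] cube by (simp_all add: scaleR_right_distrib)
  have "(1/2) *\<^sub>R (u + u') - (1/2) *\<^sub>R (v + v') = (1/2) *\<^sub>R ((u - v) + (u' - v'))"
    by (simp add: algebra_simps)
  then have "norm ((1/2) *\<^sub>R (u + u') - (1/2) *\<^sub>R (v + v')) \<le> \<delta> / 2"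
    using norm_triangle_ineq[of "u - v" "u' - v'"] by (simp add: \<delta>_def)
  then have "\<bar>f ((1/2) *\<^sub>R (u + u')) - f ((1/2) *\<^sub>R (v + v'))\<bar> \<le> L * (\<delta> / 2)"
    using lipschitz_on_normD[OF f mid] lipschitz_on_nonneg[OF f] by (smt (verit) mult_left_mono real_norm_def)
  then have mid_le: "\<bar>f ((1/2) *\<^sub>R (u + u')) - f ((1/2) *\<^sub>R (v + v'))\<bar>
      \<le> (L * norm (u - v) + L * norm (u' - v')) / 2"
    by (simp add: \<delta>_def distrib_left)
  have ends_le: "\<bar>f u - f v\<bar> \<le> L * norm (u - v)" "\<bar>f u' - f v'\<bar> \<le> L * norm (u' - v')"
    using lipschitz_on_normD[OF f] cube by auto
  have "\<bar>(norm (u - u'))\<^sup>2 - (norm (v - v'))\<^sup>2\<bar> \<le> 2 * real CARD('d) * \<delta>"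
  proof -
    have "\<bar>(norm (u - u'))\<^sup>2 - (norm (v - v'))\<^sup>2\<bar>
        = (norm (u - u') + norm (v - v')) * \<bar>norm (u - u') - norm (v - v')\<bar>"
      by (simp add: power2_eq_square square_diff_square_factored abs_mult)
    also have "\<dots> \<le> 2 * real CARD('d) * \<delta>"
    proof (rule mult_mono)
      show "norm (u - u') + norm (v - v') \<le> 2 * real CARD('d)"
        using norm_diff_le_card_if_in_unit_cube cube by (smt (verit))
      show "\<bar>norm (u - u') - norm (v - v')\<bar> \<le> \<delta>"
        using norm_triangle_ineq3[of "u - u'" "v - v'"] norm_triangle_ineq4[of "u - v" "u' - v'"]
        by (simp add: \<delta>_def algebra_simps)
    qed simp_all
    finally show ?thesis .
  qed
  then have sq_le: "\<bar>\<kappa> / 8 * (norm (u - u'))\<^sup>2 - \<kappa> / 8 * (norm (v - v'))\<^sup>2\<bar> \<le> \<kappa> * real CARD('d) / 4 * \<delta>"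
  proof -
    assume sq: "\<bar>(norm (u - u'))\<^sup>2 - (norm (v - v'))\<^sup>2\<bar> \<le> 2 * real CARD('d) * \<delta>"
    have "\<bar>\<kappa> / 8 * (norm (u - u'))\<^sup>2 - \<kappa> / 8 * (norm (v - v'))\<^sup>2\<bar>
        = \<bar>\<kappa> / 8\<bar> * \<bar>(norm (u - u'))\<^sup>2 - (norm (v - v'))\<^sup>2\<bar>"
      by (simp only: abs_mult flip: right_diff_distrib)
    also have "\<dots> \<le> \<bar>\<kappa> / 8\<bar> * (2 * real CARD('d) * \<delta>)"
      using sq by (rule mult_left_mono) simp
    finally show ?thesis using \<open>0 \<le> \<kappa>\<close> by (simp add: mult_ac)
  qed
  have "(L + \<kappa> * real CARD('d) / 4) * \<delta> = L * norm (u - v) + L * norm (u' - v') + \<kappa> * real CARD('d) / 4 * \<delta>"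
    by (simp add: \<delta>_def algebra_simps)
  then show ?thesis
    using mid_le ends_le sq_le unfolding convexity_defect_def \<delta>_def[symmetric] by argo
qed

lemma convexity_defect_ge_on_boxes:
  fixes f :: "real^'d \<Rightarrow> real"
  assumes f: "L-lipschitz_on unit_cube f" and "0 \<le> \<kappa>" and "0 \<le> \<rho>"
    and boxes: "cbox a (a + \<rho> *\<^sub>R One) \<subseteq> unit_cube" "cbox a' (a' + \<rho> *\<^sub>R One) \<subseteq> unit_cube"
    and pair: "2 * c \<le> convexity_defect \<kappa> f a a'"
    and small: "2 * real CARD('d) * (L + \<kappa> * real CARD('d) / 4) * \<rho> \<le> c"
    and u: "u \<in> cbox a (a + \<rho> *\<^sub>R One)" and u': "u' \<in> cbox a' (a' + \<rho> *\<^sub>R One)"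
  shows "c \<le> convexity_defect \<kappa> f u u'"
proof -
  have corners: "a \<in> cbox a (a + \<rho> *\<^sub>R One)" "a' \<in> cbox a' (a' + \<rho> *\<^sub>R One)"
    using \<open>0 \<le> \<rho>\<close> by (simp_all add: mem_box_cart)
  have "\<bar>(u - a) $ i\<bar> \<le> \<rho>" "\<bar>(u' - a') $ i\<bar> \<le> \<rho>" for i
    using u u' by (auto simp: mem_box_cart abs_le_iff dest!: spec[of _ i])
  then have "norm (u - a) \<le> real CARD('d) * \<rho>" "norm (u' - a') \<le> real CARD('d) * \<rho>"
    by (blast intro: norm_le_card_mult)+
  then have "(L + \<kappa> * real CARD('d) / 4) * (norm (u - a) + norm (u' - a'))
      \<le> (L + \<kappa> * real CARD('d) / 4) * (2 * real CARD('d) * \<rho>)"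
    using lipschitz_on_nonneg[OF f] \<open>0 \<le> \<kappa>\<close> by (intro mult_left_mono) auto
  then have "(L + \<kappa> * real CARD('d) / 4) * (norm (u - a) + norm (u' - a')) \<le> c"
    using small by (simp add: mult_ac)
  moreover have "\<bar>convexity_defect \<kappa> f u u' - convexity_defect \<kappa> f a a'\<bar>
      \<le> (L + \<kappa> * real CARD('d) / 4) * (norm (u - a) + norm (u' - a'))"
    using boxes corners u u' by (intro convexity_defect_lipschitz[OF f \<open>0 \<le> \<kappa>\<close>]) auto
  ultimately show ?thesis using pair by linarith
qed

lemma convexity_penalty_ge_on_boxes:
  fixes f :: "real^'d \<Rightarrow> real"
  assumes cont: "continuous_on UNIV f" and "0 \<le> \<rho>"
    and boxes: "cbox a (a + \<rho> *\<^sub>R One) \<subseteq> unit_cube" "cbox a' (a' + \<rho> *\<^sub>R One) \<subseteq> unit_cube"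
    and lower: "\<And>u u'. u \<in> cbox a (a + \<rho> *\<^sub>R One) \<Longrightarrow> u' \<in> cbox a' (a' + \<rho> *\<^sub>R One) \<Longrightarrow>
      c \<le> convexity_defect \<kappa> f u u'"
  shows "c * \<rho> ^ (2 * CARD('d)) \<le> convexity_penalty \<kappa> f"
proof -
  define g where "g = (\<lambda>(u, u'). relu (convexity_defect \<kappa> f u u'))"
  have "g = (\<lambda>p. max (f ((1/2) *\<^sub>R (fst p + snd p)) - (f (fst p) + f (snd p)) / 2
      + \<kappa> / 8 * (norm (fst p - snd p))\<^sup>2) 0)"
    by (simp add: g_def relu_def convexity_defect_def fun_eq_iff split_def)
  then have g_cont: "continuous_on UNIV g"
    by (simp, intro continuous_intros continuous_on_compose2[OF cont]) auto
  define S where "S = cbox (a, a') (a + \<rho> *\<^sub>R One, a' + \<rho> *\<^sub>R One)"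
  have cubes: "unit_cube \<times> unit_cube = cbox (0, 0) (One, One :: real^'d)"
    by (simp add: unit_cube_def cbox_Pair_eq)
  have "S \<subseteq> unit_cube \<times> unit_cube" using boxes by (auto simp: S_def cbox_Pair_eq)
  have integrable: "g integrable_on cbox b b'" for b b'
    by (rule integrable_continuous[OF continuous_on_subset[OF g_cont]]) simp
  have "integral S (\<lambda>_. c) \<le> integral S g"
  proof (rule integral_le)
    show "g integrable_on S" unfolding S_def by (rule integrable)
    show "c \<le> g p" if "p \<in> S" for p
      using that lower by (force simp: S_def cbox_Pair_eq g_def relu_def le_max_iff_disj)
  qed (unfold S_def, rule integrable_const)
  also have "\<dots> \<le> integral (unit_cube \<times> unit_cube) g"
    using \<open>S \<subseteq> unit_cube \<times> unit_cube\<close> integrable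
    by (intro integral_subset_le) (auto simp: S_def cubes g_def relu_def)
  also have "\<dots> = convexity_penalty \<kappa> f"
    by (simp add: convexity_penalty_eq_integral_convexity_defect g_def)
  moreover have "integral S (\<lambda>_. c) = c * \<rho> ^ (2 * CARD('d))"
    using \<open>0 \<le> \<rho>\<close> by (simp add: S_def content_Pair measure_cbox_cube mult_2 power_add)
  ultimately show ?thesis by simp
qed

lemma convexity_penalty_ge_if_hessian_form_lt:
  fixes f :: "real^'d \<Rightarrow> real"
  assumes fGH: "has_gradient_hessian f G H"
    and G_bound: "\<And>x i. x \<in> unit_cube \<Longrightarrow> \<bar>G x $ i\<bar> \<le> C"
    and H_lip: "\<And>x y i j. x \<in> unit_cube \<Longrightarrow> y \<in> unit_cube \<Longrightarrow>
      \<bar>H x j $ i - H y j $ i\<bar> \<le> C * norm (x - y)"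
    and "0 \<le> C" "0 \<le> \<kappa>"
    and \<xi>: "\<xi> \<in> unit_cube" and e: "norm e = 1" and e_\<xi>: "hessian_form H \<xi> e < \<kappa> - \<eta>"
    and s: "0 \<le> s" "s \<le> 1/4" "6 * real CARD('d)^3 * C * s \<le> \<eta>"
    and \<rho>: "0 \<le> \<rho>" "\<rho> \<le> s"
      "16 * real CARD('d) * (real CARD('d) * C + \<kappa> * real CARD('d) / 4) * \<rho> \<le> s\<^sup>2 * \<eta>"
  shows "s\<^sup>2 * \<eta> / 8 * \<rho> ^ (2 * CARD('d)) \<le> convexity_penalty \<kappa> f"
proof -
  define D where "D = real CARD('d)"
  have "1 \<le> D" by (simp add: D_def)
  \<comment> \<open>\<open>\<xi>\<close> is pulled towards the centre so that \<open>p \<plusminus> s e\<close> and the boxes of side \<open>\<rho>\<close>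
    at these points stay inside the cube.\<close>
  define p where "p = (1 - 4 * s) *\<^sub>R \<xi> + (2 * s) *\<^sub>R One"
  have p: "2 * s \<le> p $ i \<and> p $ i \<le> 1 - 2 * s" and p_\<xi>: "\<bar>(p - \<xi>) $ i\<bar> \<le> 2 * s" for i
  proof -
    have \<xi>i: "0 \<le> \<xi> $ i" "\<xi> $ i \<le> 1" using \<xi> by (auto simp: mem_unit_cube_iff)
    then have "0 \<le> s * \<xi> $ i" "s * \<xi> $ i \<le> s" using s(1) by (simp_all add: mult_left_le)
    moreover have "4 * (s * \<xi> $ i) \<le> \<xi> $ i"
      using \<xi>i s(2) mult_right_mono[of "4 * s" 1 "\<xi> $ i"] by simp
    moreover have "0 \<le> (1 - \<xi> $ i) * (1 - 4 * s)" using \<xi>i s(2) by simp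
    ultimately show "2 * s \<le> p $ i \<and> p $ i \<le> 1 - 2 * s" "\<bar>(p - \<xi>) $ i\<bar> \<le> 2 * s"
      by (auto simp: p_def algebra_simps abs_le_iff)
  qed
  have se: "\<bar>s * e $ i\<bar> \<le> s" for i
    using component_le_norm_cart[of e i] e s by (simp add: abs_mult mult_left_le)
  have "0 \<le> (p - s *\<^sub>R e) $ i" "(p - s *\<^sub>R e) $ i + \<rho> \<le> 1"
    "0 \<le> (p + s *\<^sub>R e) $ i" "(p + s *\<^sub>R e) $ i + \<rho> \<le> 1" for i
    using p[of i] se[of i] s(1) \<rho>(2) by (auto simp: abs_le_iff)
  note coords = this
  have boxes: "cbox (p - s *\<^sub>R e) (p - s *\<^sub>R e + \<rho> *\<^sub>R One) \<subseteq> unit_cube"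
    "cbox (p + s *\<^sub>R e) (p + s *\<^sub>R e + \<rho> *\<^sub>R One) \<subseteq> unit_cube"
    by (rule cbox_subset_unit_cube[OF coords(1,2)], rule cbox_subset_unit_cube[OF coords(3,4)])
  then have ends: "p - s *\<^sub>R e \<in> unit_cube" "p + s *\<^sub>R e \<in> unit_cube"
    using \<rho>(1) by (auto simp: mem_box_cart)
  have "s \<le> D * s" using mult_right_mono[OF \<open>1 \<le> D\<close> s(1)] by simp
  then have r1: "norm (p - \<xi>) + \<bar>s\<bar> \<le> 3 * D * s"
    using norm_le_card_mult[OF p_\<xi>] s(1) unfolding D_def[symmetric] by linarith
  have r2: "D^2 * C * (3 * D * s) \<le> \<eta> / 2"
    using s(3) by (simp add: D_def power3_eq_cube power2_eq_square mult_ac)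
  have "s\<^sup>2 * \<eta> / 4 \<le> convexity_defect \<kappa> f (p - s *\<^sub>R e) (p + s *\<^sub>R e)"
    using fGH H_lip \<open>0 \<le> C\<close> ends \<xi> e e_\<xi> r1[unfolded D_def] r2[unfolded D_def]
    by (rule convexity_defect_ge_along_direction)
  then have pair: "2 * (s\<^sup>2 * \<eta> / 8) \<le> convexity_defect \<kappa> f (p - s *\<^sub>R e) (p + s *\<^sub>R e)"
    by (simp add: mult.commute)
  have lip: "(D * C)-lipschitz_on unit_cube f"
    unfolding D_def using fGH G_bound \<open>0 \<le> C\<close> unfolding has_gradient_hessian_def
    by (intro lipschitz_on_unit_cube_if_gradient_bounded) auto
  have "2 * D * (D * C + \<kappa> * D / 4) * \<rho> \<le> s\<^sup>2 * \<eta> / 8"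
    using \<rho>(3) by (simp add: D_def)
  then have lower: "s\<^sup>2 * \<eta> / 8 \<le> convexity_defect \<kappa> f u u'"
    if "u \<in> cbox (p - s *\<^sub>R e) (p - s *\<^sub>R e + \<rho> *\<^sub>R One)"
      "u' \<in> cbox (p + s *\<^sub>R e) (p + s *\<^sub>R e + \<rho> *\<^sub>R One)" for u u'
    using convexity_defect_ge_on_boxes[OF lip \<open>0 \<le> \<kappa>\<close> \<rho>(1) boxes pair _ that] by (simp add: D_def)
  have "continuous_on UNIV f"
    using fGH has_derivative_continuous unfolding has_gradient_hessian_def
    by (blast intro: continuous_at_imp_continuous_on)
  then show ?thesis using \<rho>(1) boxes lower by (rule convexity_penalty_ge_on_boxes)
qed

lemma convexity_penalty_uniform_lower_bound:
  fixes \<kappa> \<eta> Ht :: real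
  assumes "0 < \<eta>" "\<eta> < \<kappa>"
  shows "\<exists>\<zeta> > 0. \<forall>f :: real^'d \<Rightarrow> real. c21_loc f \<longrightarrow> c21_norm f \<le> Ht \<longrightarrow>
           \<not> strongly_convex_on_cube (\<kappa> - \<eta>) f \<longrightarrow> \<zeta> \<le> convexity_penalty \<kappa> f"
proof -
  define D where "D = real CARD('d)"
  define C where "C = \<bar>Ht\<bar>"
  define K where "K = 6 * D^3 * (C + 1)"
  define s where "s = min (1/4) (\<eta> / K)"
  define L where "L = 16 * D * (D * C + \<kappa> * D / 4)"
  define \<rho> where "\<rho> = min s (s\<^sup>2 * \<eta> / L)"
  have "1 \<le> D" "0 \<le> C" "0 < \<kappa>" using assms by (simp_all add: D_def C_def)
  then have "0 < K" "6 * D^3 * C \<le> K" by (simp_all add: K_def add_pos_nonneg algebra_simps)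
  then have s: "0 < s" "s \<le> 1/4" "6 * D^3 * C * s \<le> \<eta>"
  proof -
    show "0 < s" using \<open>0 < K\<close> assms(1) by (simp add: s_def)
    show "s \<le> 1/4" unfolding s_def by (rule min.cobounded1)
    have "6 * D^3 * C * s \<le> K * s" using \<open>6 * D^3 * C \<le> K\<close> \<open>0 < s\<close> by (simp add: mult_right_mono)
    also have "\<dots> \<le> K * (\<eta> / K)" using \<open>0 < K\<close> by (intro mult_left_mono) (simp_all add: s_def)
    finally show "6 * D^3 * C * s \<le> \<eta>" using \<open>0 < K\<close> by simp
  qed
  have "0 < L" using \<open>1 \<le> D\<close> \<open>0 \<le> C\<close> \<open>0 < \<kappa>\<close> by (simp add: L_def add_nonneg_pos)
  have \<rho>: "0 < \<rho>" "\<rho> \<le> s" "L * \<rho> \<le> s\<^sup>2 * \<eta>"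
  proof -
    show "0 < \<rho>" using \<open>0 < L\<close> s(1) assms(1) by (simp add: \<rho>_def)
    show "\<rho> \<le> s" unfolding \<rho>_def by (rule min.cobounded1)
    have "L * \<rho> \<le> L * (s\<^sup>2 * \<eta> / L)" using \<open>0 < L\<close> by (intro mult_left_mono) (simp_all add: \<rho>_def)
    then show "L * \<rho> \<le> s\<^sup>2 * \<eta>" using \<open>0 < L\<close> by simp
  qed
  have "0 < s\<^sup>2 * \<eta> / 8 * \<rho> ^ (2 * CARD('d))" using s(1) \<rho>(1) assms(1) by simp
  moreover have "s\<^sup>2 * \<eta> / 8 * \<rho> ^ (2 * CARD('d)) \<le> convexity_penalty \<kappa> f"
    if "c21_loc f" "c21_norm f \<le> Ht" "\<not> strongly_convex_on_cube (\<kappa> - \<eta>) f" for f :: "real^'d \<Rightarrow> real"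
  proof -
    obtain G H where fGH: "has_gradient_hessian f G H" and lip: "lipschitz_on_bounded f"
      "\<And>j. lipschitz_on_bounded (\<lambda>x. G x $ j)" "\<And>i j. lipschitz_on_bounded (\<lambda>x. H x j $ i)"
      using \<open>c21_loc f\<close> by (rule c21_locE) blast
    note bounds = c21_norm_bounds[OF fGH lip \<open>c21_norm f \<le> Ht\<close>]
    have G_bound: "\<bar>G x $ i\<bar> \<le> C" if "x \<in> unit_cube" for x i
      using bounds(1)[OF that, of i] unfolding C_def by linarith
    have H_lip: "\<bar>H x j $ i - H y j $ i\<bar> \<le> C * norm (x - y)"
      if "x \<in> unit_cube" "y \<in> unit_cube" for x y i j
      using bounds(2)[OF that, of j i] mult_right_mono[OF abs_ge_self norm_ge_zero, of Ht "x - y"]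
      unfolding C_def by linarith
    obtain \<xi> e where "\<xi> \<in> unit_cube" "norm e = 1" "hessian_form H \<xi> e < \<kappa> - \<eta>"
      using fGH \<open>\<not> strongly_convex_on_cube (\<kappa> - \<eta>) f\<close> by (rule hessian_form_lt_if_not_strongly_convex)
    from convexity_penalty_ge_if_hessian_form_lt[OF fGH G_bound H_lip \<open>0 \<le> C\<close> _ this
        _ s(2) s(3)[unfolded D_def] _ \<rho>(2) \<rho>(3)[unfolded L_def D_def]]
    show ?thesis using \<open>0 < \<kappa>\<close> s(1) \<rho>(1) by simp
  qed
  ultimately show ?thesis by blast
qed

theorem proposition6:
  fixes M \<epsilon> \<eta> Ht :: real
    and A :: "nat list"
    and \<phi>\<^sub>\<epsilon> :: "real^'d \<Rightarrow> real"
  assumes "M > 1"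
    and "\<epsilon> > 0"
    and "is_recu_net A \<phi>\<^sub>\<epsilon>"
    and "hess_between (1 / (2 * M)) (2 * M) \<phi>\<^sub>\<epsilon>"
    and "Ht \<ge> c21_norm \<phi>\<^sub>\<epsilon>"
    and "0 < \<eta>" and "\<eta> < (1 / M) / 2"
  shows "\<exists>\<zeta> > 0. \<forall>\<phi> :: real^'d \<Rightarrow> real \<in> H_pot A Ht.
           \<not> strongly_convex_on_cube ((1 / M) / 2 - \<eta>) \<phi> \<longrightarrow>
           convexity_penalty ((1 / M) / 2) \<phi> \<ge> \<zeta>"
proof -
  obtain \<zeta> where "\<zeta> > 0" and \<zeta>: "\<And>f :: real^'d \<Rightarrow> real. c21_loc f \<Longrightarrow> c21_norm f \<le> Ht \<Longrightarrow>
      \<not> strongly_convex_on_cube ((1 / M) / 2 - \<eta>) f \<Longrightarrow> \<zeta> \<le> convexity_penalty ((1 / M) / 2) f"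
    using convexity_penalty_uniform_lower_bound[OF \<open>0 < \<eta>\<close> \<open>\<eta> < (1 / M) / 2\<close>, of Ht] by blast
  have "\<zeta> \<le> convexity_penalty ((1 / M) / 2) \<phi>"
    if "\<phi> \<in> H_pot A Ht" "\<not> strongly_convex_on_cube ((1 / M) / 2 - \<eta>) \<phi>" for \<phi> :: "real^'d \<Rightarrow> real"
    using that c21_loc_if_recu_net by (intro \<zeta>) (auto simp: H_pot_def)
  then show ?thesis using \<open>\<zeta> > 0\<close> by blast
qed

end
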